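(* For all $n\ge 0$, $a(n)\equiv \lfloor n\varphi\rfloor \pmod 2$.
   Context: $\varphi=(1+\sqrt5)/2$. Let $(F_n)_{n\ge 0}$ be the Fibonacci numbers: $F_0=0$, $F_1=1$, $F_n=F_{n-1}+F_{n-2}$ for $n\ge 2$. Define $(a(n))_{n\ge 0}$ (OEIS A105774) by $a(0)=0$, $a(1)=1$, and for $n\ge 2$, $a(n)=F_{j+1}-a(n-F_j)$, where $j\ge 2$ is the unique index with $F_j<n\le F_{j+1}$. *)

theory Defs
  imports Complex_Main "HOL-Number_Theory.Fib" "HOL-Number_Theory.Cong"
begin

definition phi :: real where "phi = (1 + sqrt 5) / 2"

(* the unique index j >= 2 with F_j < n <= F_{j+1} (meaningful for n >= 2) *)
definition fib_idx :: "nat \<Rightarrow> nat" where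
  "fib_idx n = (THE j. 2 \<le> j \<and> fib j < n \<and> n \<le> fib (Suc j))"

lemma fib_strict: "2 \<le> j \<Longrightarrow> fib j < fib (Suc j)"
proof -
  assume "2 \<le> j"
  then obtain k where "j = Suc (Suc k)" by (metis add_2_eq_Suc le_Suc_ex)
  then show ?thesis using fib_neq_0_nat[of "Suc k"] by simp
qed

lemma fib_strict_mono: "2 \<le> i \<Longrightarrow> i < j \<Longrightarrow> fib i < fib j"
proof (induction j)
  case 0 then show ?case by simp
next
  case (Suc j)
  then show ?case
    by (metis fib_strict less_Suc_eq order_le_less_trans order_less_trans order.refl
        dual_order.trans less_imp_le_nat)
qed

lemma fib_ge: "k \<le> fib (Suc k)"
proof (induction k)
  case 0 then show ?case by simp
next
  case (Suc k)
  show ?case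
  proof (cases k)
    case 0 then show ?thesis by simp
  next
    case (Suc m)
    then have "fib (Suc (Suc k)) = fib (Suc k) + fib k" by simp
    moreover have "fib k \<ge> 1" using Suc fib_neq_0_nat[of k] by simp
    ultimately show ?thesis using Suc.IH by linarith
  qed
qed

lemma fib_idx_ex: "2 \<le> n \<Longrightarrow> \<exists>j. 2 \<le> j \<and> fib j < n \<and> n \<le> fib (Suc j)"
proof -
  assume n: "2 \<le> n"
  define j where "j = (LEAST j. n \<le> fib (Suc j))"
  have ex: "n \<le> fib (Suc n)" by (rule fib_ge)
  have j1: "n \<le> fib (Suc j)" unfolding j_def using ex by (rule LeastI)
  have j2: "\<And>i. i < j \<Longrightarrow> \<not> n \<le> fib (Suc i)" unfolding j_def by (rule not_less_Least)
  have "j \<ge> 2"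
  proof (rule ccontr)
    assume "\<not> 2 \<le> j"
    then have "j = 0 \<or> j = 1" by auto
    then show False using j1 n by (auto simp: numeral_2_eq_2)
  qed
  moreover have "fib j < n"
  proof -
    obtain i where "j = Suc i" using \<open>j \<ge> 2\<close> by (metis Suc_le_D numeral_2_eq_2)
    then show ?thesis using j2[of i] by simp
  qed
  ultimately show ?thesis using j1 by blast
qed

lemma fib_idx_unique:
  assumes "2 \<le> i" "fib i < n" "n \<le> fib (Suc i)" "2 \<le> j" "fib j < n" "n \<le> fib (Suc j)"
  shows "i = j"
proof (rule ccontr)
  assume "i \<noteq> j"
  then have "i < j \<or> j < i" by auto
  then show False
  proof
    assume "i < j"
    then have "Suc i \<le> j" by simp
    then have "fib (Suc i) \<le> fib j" by (rule fib_mono)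
    then show False using assms by linarith
  next
    assume "j < i"
    then have "Suc j \<le> i" by simp
    then have "fib (Suc j) \<le> fib i" by (rule fib_mono)
    then show False using assms by linarith
  qed
qed

lemma fib_idx_spec: "2 \<le> n \<Longrightarrow>
    2 \<le> fib_idx n \<and> fib (fib_idx n) < n \<and> n \<le> fib (Suc (fib_idx n))"
  unfolding fib_idx_def
  by (rule theI') (metis fib_idx_ex fib_idx_unique)

lemma fib_idx_wf: "2 \<le> n \<Longrightarrow> 0 < fib (fib_idx n) \<and> fib (fib_idx n) < n"
  using fib_idx_spec[of n] fib_neq_0_nat[of "fib_idx n"] by auto

function A105774 :: "nat \<Rightarrow> int" where
  "A105774 n = (if n = 0 then 0 else if n = 1 then 1
     else int (fib (Suc (fib_idx n))) - A105774 (n - fib (fib_idx n)))"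
  by auto
termination
proof (relation "measure id")
  fix n :: nat
  assume "\<not> n = 0" "\<not> n = 1"
  then have "2 \<le> n" by auto
  then show "(n - fib (fib_idx n), n) \<in> measure id" using fib_idx_wf[of n] by auto
qed auto

end

theory Submission
  imports Defs
begin

(* With psi = phi - 1 = 1/phi one has F_j * phi = F_(j+1) - (-psi)^j, and multiples m * phi with
   0 < m < F_j stay at distance at least psi^(j-1) > psi^j from every integer (a descent:
   (m, k) |-> (k - m, m) multiplies m * phi - k by -phi).  Hence adding F_j to such an m adds
   exactly F_(j+1) to floor (m * phi).  With m = n - F_j this matches the recursion of a(n) up to
   the sign of a(n - F_j), which is invisible mod 2. *)

lemma phi_bounds: "3/2 < phi" "phi < 2"
proof -
  have "2 < sqrt (5::real)" by (rule real_less_rsqrt) simp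
  moreover have "sqrt (5::real) < 3" by (rule real_less_lsqrt) simp_all
  ultimately show "3/2 < phi" "phi < 2" unfolding phi_def by simp_all
qed

lemma phi_squared: "phi^2 = phi + 1"
  unfolding phi_def power2_eq_square by (simp add: field_simps)

definition psi :: real where "psi = phi - 1"

lemma psi_pos: "0 < psi" and psi_less_1: "psi < 1"
  using phi_bounds unfolding psi_def by simp_all

lemma phi_times_psi: "phi * psi = 1"
  using phi_squared unfolding psi_def power2_eq_square by (simp add: algebra_simps)

lemma psi_squared: "psi^2 = 1 - psi"
  using phi_squared unfolding psi_def power2_eq_square by (simp add: algebra_simps)

lemma fib_times_phi: "phi * fib n = fib (Suc n) - (-psi)^n"
proof -
  have sqrt5: "sqrt 5 = phi + psi" unfolding psi_def phi_def by (simp add: field_simps)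
  have binet: "sqrt 5 * fib k = phi^k - (-psi)^k" for k
  proof -
    have "(1 - sqrt 5) / 2 = - psi" unfolding psi_def phi_def by (simp add: field_simps)
    then show ?thesis using fib_closed_form[of k, folded phi_def] by simp
  qed
  have "sqrt 5 * (fib (Suc n) - phi * fib n) = sqrt 5 * (-psi)^n"
    unfolding right_diff_distrib binet mult.left_commute[of _ phi] by (simp add: sqrt5 algebra_simps)
  then show ?thesis by simp
qed

lemma floor_phi: "\<lfloor>phi\<rfloor> = 1" and floor_2_phi: "\<lfloor>2 * phi\<rfloor> = 3"
  using phi_bounds by (simp_all add: floor_eq_iff)

lemma abs_times_phi_minus_int_ge:
  fixes m k :: int
  assumes "1 \<le> i" "0 < m" "m < fib (Suc i)"
  shows "psi^i \<le> \<bar>m * phi - k\<bar>"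
  using assms
proof (induction i arbitrary: m k rule: dec_induct)
  case base
  then show ?case by simp
next
  case (step i)
  show ?case
  proof (rule ccontr)
    assume "\<not> ?thesis"
    then have close: "\<bar>m * phi - k\<bar> < psi * psi^i" by simp
    have k_minus_m: "k - m = (k - m * phi) + m * psi"
      unfolding psi_def by (simp add: algebra_simps)
    have "psi * psi^i \<le> psi"
      using psi_pos psi_less_1 by (simp add: power_le_one mult_left_le)
    moreover have "psi \<le> m * psi" using step.prems psi_pos by simp
    ultimately have lower: "0 < k - m" using k_minus_m close by linarith
    (* k - m < m * psi + psi^(i+1) \<le> (F_(i+2) - 1) * psi + psi^(i+1) = F_(i+1) + psi^i - psi *)
    have "psi^i \<le> psi"
      using step.hyps psi_pos psi_less_1 by (metis power_decreasing power_one_right less_imp_le)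
    moreover have "(real (fib (Suc (Suc i))) - 1) * psi = fib (Suc i) - (-psi) ^ Suc (Suc i) - psi"
    proof -
      have "fib (Suc (Suc i)) * psi = phi * fib (Suc (Suc i)) - fib (Suc (Suc i))"
        unfolding psi_def by (simp add: algebra_simps)
      then show ?thesis unfolding fib_times_phi by (simp add: algebra_simps)
    qed
    moreover have "psi ^ Suc (Suc i) + psi * psi^i = psi^i"
    proof -
      have "psi ^ Suc (Suc i) + psi * psi^i = psi^i * (psi^2 + psi)"
        by (simp add: power2_eq_square algebra_simps)
      then show ?thesis using psi_squared by simp
    qed
    moreover have "m * psi \<le> (real (fib (Suc (Suc i))) - 1) * psi"
      using step.prems psi_pos by (intro mult_right_mono) linarith+
    moreover have "\<bar>(-psi) ^ Suc (Suc i)\<bar> = psi ^ Suc (Suc i)"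
      by (simp only: power_abs abs_minus_cancel abs_of_pos[OF psi_pos])
    ultimately have "real_of_int (k - m) < fib (Suc i)"
      using k_minus_m close by linarith
    then have upper: "k - m < fib (Suc i)" by linarith
    have "(k - m) * phi - m = k * phi - m * phi^2"
      by (simp add: phi_squared algebra_simps)
    also have "\<dots> = - phi * (m * phi - k)"
      by (simp add: power2_eq_square algebra_simps)
    finally have "\<bar>(k - m) * phi - m\<bar> = phi * \<bar>m * phi - k\<bar>"
      using phi_bounds by (simp only: abs_mult abs_minus abs_of_pos)
    also have "\<dots> < phi * (psi * psi^i)"
      using close phi_bounds by simp
    also have "\<dots> = psi^i" using phi_times_psi by simp
    finally show False using step.IH[of "k - m" m] lower upper by linarith
  qed
qed

lemma floor_add_fib_times_phi:
  fixes m :: nat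
  assumes "2 \<le> j" "0 < m" "m < fib j"
  shows "\<lfloor>(m + fib j) * phi\<rfloor> = \<lfloor>m * phi\<rfloor> + fib (Suc j)"
proof -
  obtain i where j: "j = Suc i" and "1 \<le> i" using assms(1) by (cases j) auto
  define k where "k = \<lfloor>m * phi\<rfloor>"
  have "psi^i \<le> \<bar>m * phi - k\<bar>" "psi^i \<le> \<bar>m * phi - (k + 1)\<bar>"
    using abs_times_phi_minus_int_ge[of i "int m" k] abs_times_phi_minus_int_ge[of i "int m" "k + 1"]
      \<open>1 \<le> i\<close> assms j by simp_all
  moreover have "k \<le> m * phi" "m * phi < k + 1" unfolding k_def by linarith+
  ultimately have margin: "k + psi^i \<le> m * phi" "m * phi + psi^i \<le> k + 1" by simp_all
  have "(m + fib j) * phi = m * phi + fib (Suc j) - (-psi)^j"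
    using fib_times_phi[of j] by (simp add: algebra_simps)
  moreover have "\<bar>(-psi)^j\<bar> < psi^i"
    unfolding j power_abs abs_minus_cancel abs_of_pos[OF psi_pos]
    using psi_pos psi_less_1 by (simp add: power_strict_decreasing)
  ultimately show ?thesis
    unfolding floor_eq_iff k_def[symmetric] using margin by (simp, linarith)
qed

lemma floor_times_phi_fib_idx:
  assumes "2 \<le> n"
  defines "j \<equiv> fib_idx n"
  shows "\<lfloor>n * phi\<rfloor> = \<lfloor>(n - fib j) * phi\<rfloor> + fib (Suc j)"
proof -
  have j: "2 \<le> j" "fib j < n" "n \<le> fib (Suc j)"
    using fib_idx_spec[OF assms(1)] unfolding j_def by auto
  show ?thesis
  proof (cases "n - fib j < fib j")
    case True
    then show ?thesis
      using floor_add_fib_times_phi[of j "n - fib j"] j by simp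
  next
    case False
    obtain i where i: "j = Suc (Suc i)" using j(1) by (metis add_2_eq_Suc le_Suc_ex)
    with j False have "fib (Suc (Suc i)) \<le> fib (Suc i)" by simp
    then have "i = 0" using fib_strict[of "Suc i"] by (cases i) auto
    with i j have "n = 2" by (simp add: numeral_2_eq_2)
    then show ?thesis
      using i \<open>i = 0\<close> floor_phi floor_2_phi by (simp add: numeral_3_eq_3)
  qed
qed

lemma cong_diff_add_mod_2: "[a = b] (mod 2) \<Longrightarrow> [c - a = b + c] (mod 2)" for a b c :: int
  unfolding cong_def by presburger

lemma A105774_step:
  "2 \<le> n \<Longrightarrow> A105774 n = fib (Suc (fib_idx n)) - A105774 (n - fib (fib_idx n))"
  by (subst A105774.simps) simp

theorem proposition17:
  fixes n :: nat
  shows "[A105774 n = \<lfloor>real n * phi\<rfloor>] (mod 2)"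
proof (induction n rule: less_induct)
  case (less n)
  consider "n = 0" | "n = 1" | "2 \<le> n" by linarith
  then show ?case
  proof cases
    case 1
    then show ?thesis by simp
  next
    case 2
    then show ?thesis by (simp add: floor_phi)
  next
    case 3
    define m where "m = n - fib (fib_idx n)"
    have "m < n" using fib_idx_wf[OF 3] unfolding m_def by simp
    then have "[A105774 m = \<lfloor>m * phi\<rfloor>] (mod 2)" by (rule less.IH)
    then show ?thesis
      unfolding A105774_step[OF 3] floor_times_phi_fib_idx[OF 3] m_def[symmetric]
      by (rule cong_diff_add_mod_2)
  qed
qed

end
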